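(* For all integers $m,n\ge 1$, the lexicographic product $K_{4m}\circ\overline{K_{2n+1}}$ (an odd-regular graph on $4m(2n+1)$ vertices) is orientable $\mathbb{Z}_{4m(2n+1)}$-distance magic.
   Context: For graphs $G,H$, the lexicographic product $G\circ H$ has vertex set $V(G)\times V(H)$, with $(g,h)$ adjacent to $(g',h')$ iff $g$ is adjacent to $g'$ in $G$, or $g=g'$ and $h$ is adjacent to $h'$ in $H$. $\overline{K_n}$ denotes the edgeless graph on $n$ vertices. For an oriented graph $\vec G$ and a vertex $x$, $N^+(x)$ is the set of vertices $y$ with an arc from $x$ to $y$, and $N^-(x)$ is the set of vertices $y$ with an arc from $y$ to $x$. For an Abelian group $\Gamma$ of order $n$, a directed $\Gamma$-distance magic labeling of an oriented graph $\vec G$ of order $n$ is a bijection $\vec l:V\to\Gamma$ such that there is $\mu\in\Gamma$ with $\sum_{y\in N^+(x)}\vec l(y)-\sum_{y\in N^-(x)}\vec l(y)=\mu$ for every vertex $x$. A simple graph $G$ of order $n$ is orientable $\Gamma$-distance magic if some orientation of its edges admits a directed $\Gamma$-distance magic labeling. $\mathbb{Z}_n$ is the cyclic group of integers modulo $n$. *)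

theory Defs
  imports "HOL-Number_Theory.Cong"
begin

definition simple_graph :: "'a set \<Rightarrow> ('a \<Rightarrow> 'a \<Rightarrow> bool) \<Rightarrow> bool" where
  "simple_graph V E \<longleftrightarrow> finite V \<and>
     (\<forall>x y. E x y \<longrightarrow> x \<in> V \<and> y \<in> V) \<and>
     (\<forall>x. \<not> E x x) \<and> (\<forall>x y. E x y \<longrightarrow> E y x)"

definition complete_graph_E :: "nat \<Rightarrow> nat \<Rightarrow> nat \<Rightarrow> bool" where
  "complete_graph_E k x y \<longleftrightarrow> x < k \<and> y < k \<and> x \<noteq> y"

definition edgeless_graph_E :: "nat \<Rightarrow> nat \<Rightarrow> nat \<Rightarrow> bool" where
  "edgeless_graph_E k x y \<longleftrightarrow> False"

definition lex_prod_V :: "'a set \<Rightarrow> 'b set \<Rightarrow> ('a \<times> 'b) set" where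
  "lex_prod_V VG VH = VG \<times> VH"

definition lex_prod_E :: "'a set \<Rightarrow> ('a \<Rightarrow> 'a \<Rightarrow> bool) \<Rightarrow> 'b set \<Rightarrow> ('b \<Rightarrow> 'b \<Rightarrow> bool)
    \<Rightarrow> ('a \<times> 'b) \<Rightarrow> ('a \<times> 'b) \<Rightarrow> bool" where
  "lex_prod_E VG EG VH EH p q \<longleftrightarrow>
     p \<in> VG \<times> VH \<and> q \<in> VG \<times> VH \<and>
     (EG (fst p) (fst q) \<or> (fst p = fst q \<and> EH (snd p) (snd q)))"

definition orientation :: "('a \<Rightarrow> 'a \<Rightarrow> bool) \<Rightarrow> ('a \<Rightarrow> 'a \<Rightarrow> bool) \<Rightarrow> bool" where
  "orientation E D \<longleftrightarrow>
     (\<forall>x y. D x y \<longrightarrow> E x y) \<and>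
     (\<forall>x y. E x y \<longrightarrow> (D x y \<or> D y x)) \<and>
     (\<forall>x y. D x y \<longrightarrow> \<not> D y x)"

definition out_nbrs :: "'a set \<Rightarrow> ('a \<Rightarrow> 'a \<Rightarrow> bool) \<Rightarrow> 'a \<Rightarrow> 'a set" where
  "out_nbrs V D x = {y \<in> V. D x y}"

definition in_nbrs :: "'a set \<Rightarrow> ('a \<Rightarrow> 'a \<Rightarrow> bool) \<Rightarrow> 'a \<Rightarrow> 'a set" where
  "in_nbrs V D x = {y \<in> V. D y x}"

text \<open>Directed Z_n-distance magic labeling of the oriented graph (V,D), n = |V|.
  Z_n is represented by residues {0..<n} of int, with arithmetic mod n.\<close>
definition directed_Zn_distance_magic_labeling ::
    "'a set \<Rightarrow> ('a \<Rightarrow> 'a \<Rightarrow> bool) \<Rightarrow> ('a \<Rightarrow> int) \<Rightarrow> bool" where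
  "directed_Zn_distance_magic_labeling V D l \<longleftrightarrow>
     bij_betw l V {0..<int (card V)} \<and>
     (\<exists>\<mu>. \<forall>x\<in>V.
        [(\<Sum>y\<in>out_nbrs V D x. l y) - (\<Sum>y\<in>in_nbrs V D x. l y) = \<mu>] (mod int (card V)))"

definition orientable_Zn_distance_magic :: "'a set \<Rightarrow> ('a \<Rightarrow> 'a \<Rightarrow> bool) \<Rightarrow> bool" where
  "orientable_Zn_distance_magic V E \<longleftrightarrow>
     (\<exists>D l. orientation E D \<and> directed_Zn_distance_magic_labeling V D l)"

end

theory Submission
  imports Defs
begin

text \<open>
  The graph is the complete multipartite graph with 4m parts (columns) of size 2n + 1.
  Orient every edge from the smaller to the larger column, except that the arcs at one
  special vertex s are reversed. Giving s the sign -1 and every other vertex the sign +1,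
  the difference of out- and in-sums at a vertex x is, up to the sign of x, a signed
  combination of the signed column sums. So a bijective labeling all of whose signed column
  sums vanish modulo N = 4m(2n + 1) is magic with \<mu> = 0. Such a labeling is
  (2n + 1) g_j(i) + r(j) on vertex (i, j), with g_j permutations of the columns and r
  a permutation of the copies: for j \<ge> 3 the copies are paired so that each pair contributes
  exactly N to every column, and the first three copies are arranged so that, with the sign
  of s = (3m, 0), their contribution to every column is a multiple of N as well.
\<close>

definition signed_orientation ::
    "('a::linorder \<times> 'b) set \<Rightarrow> ('a \<times> 'b) set \<Rightarrow> 'a \<times> 'b \<Rightarrow> 'a \<times> 'b \<Rightarrow> bool" where
  "signed_orientation V S x y \<longleftrightarrow>
     x \<in> V \<and> y \<in> V \<and> fst x \<noteq> fst y \<and> (fst x < fst y \<longleftrightarrow> (x \<in> S \<longleftrightarrow> y \<in> S))"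

definition sign_in :: "'c set \<Rightarrow> 'c \<Rightarrow> int" where
  "sign_in S x = (if x \<in> S then -1 else 1)"

definition signed_column_sum :: "('a \<times> 'b) set \<Rightarrow> 'b set \<Rightarrow> ('a \<times> 'b \<Rightarrow> int) \<Rightarrow> 'a \<Rightarrow> int" where
  "signed_column_sum S J l i = (\<Sum>j\<in>J. sign_in S (i, j) * l (i, j))"

lemma orientation_signed_orientation:
  "orientation (lex_prod_E {0..<k} (complete_graph_E k) {0..<t} (edgeless_graph_E t))
     (signed_orientation ({0..<k} \<times> {0..<t}) S)"
  unfolding orientation_def signed_orientation_def lex_prod_E_def complete_graph_E_def
    edgeless_graph_E_def
  by auto

lemma signed_orientation_out_minus_in:
  fixes I :: "'a::linorder set" and J :: "'b set"
  assumes "finite I" "finite J" "x \<in> I \<times> J"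
  shows "(\<Sum>y\<in>out_nbrs (I \<times> J) (signed_orientation (I \<times> J) S) x. l y)
           - (\<Sum>y\<in>in_nbrs (I \<times> J) (signed_orientation (I \<times> J) S) x. l y)
         = sign_in S x * (\<Sum>i\<in>I - {fst x}. (if fst x < i then 1 else -1) * signed_column_sum S J l i)"
proof -
  let ?D = "signed_orientation (I \<times> J) S"
  define Nb where "Nb = (I - {fst x}) \<times> J"
  have out: "out_nbrs (I \<times> J) ?D x = Nb \<inter> {y. ?D x y}"
   and inn: "in_nbrs (I \<times> J) ?D x = Nb \<inter> - {y. ?D x y}"
    using assms(3) by (auto simp: out_nbrs_def in_nbrs_def Nb_def signed_orientation_def)
  have "finite Nb"
    using assms(1,2) by (simp add: Nb_def)
  have "(\<Sum>y\<in>out_nbrs (I \<times> J) ?D x. l y) - (\<Sum>y\<in>in_nbrs (I \<times> J) ?D x. l y)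
      = (\<Sum>y\<in>Nb. if ?D x y then l y else - l y)"
    unfolding out inn sum.If_cases[OF \<open>finite Nb\<close>] by (simp add: sum_negf)
  also have "\<dots> = (\<Sum>y\<in>Nb. sign_in S x * ((if fst x < fst y then 1 else -1) * (sign_in S y * l y)))"
    using assms(3) by (intro sum.cong) (auto simp: Nb_def signed_orientation_def sign_in_def)
  also have "\<dots> = sign_in S x * (\<Sum>i\<in>I - {fst x}. (if fst x < i then 1 else -1) * signed_column_sum S J l i)"
    by (simp add: Nb_def sum.cartesian_product' signed_column_sum_def sum_distrib_left)
  finally show ?thesis .
qed

lemma directed_magic_if_signed_column_sums_dvd:
  fixes I :: "'a::linorder set" and J :: "'b set"
  assumes "finite I" "finite J" and bij: "bij_betw l (I \<times> J) {0..<int (card (I \<times> J))}"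
    and dvd: "\<And>i. i \<in> I \<Longrightarrow> int (card (I \<times> J)) dvd signed_column_sum S J l i"
  shows "directed_Zn_distance_magic_labeling (I \<times> J) (signed_orientation (I \<times> J) S) l"
  unfolding directed_Zn_distance_magic_labeling_def
proof (intro conjI exI ballI)
  fix x assume "x \<in> I \<times> J"
  then show "[(\<Sum>y\<in>out_nbrs (I \<times> J) (signed_orientation (I \<times> J) S) x. l y)
      - (\<Sum>y\<in>in_nbrs (I \<times> J) (signed_orientation (I \<times> J) S) x. l y) = 0] (mod int (card (I \<times> J)))"
    unfolding cong_0_iff signed_orientation_out_minus_in[OF assms(1,2) \<open>x \<in> I \<times> J\<close>]
    by (intro dvd_mult dvd_sum) (auto intro: dvd)
qed (fact bij)

lemma bij_betw_mixed_radix: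
  fixes g :: "nat \<Rightarrow> nat \<Rightarrow> nat"
  assumes r: "bij_betw r {0..<t} {0..<t}" and g: "\<And>j. j < t \<Longrightarrow> bij_betw (g j) {0..<k} {0..<k}"
  shows "bij_betw (\<lambda>(i, j). int (t * g j i + r j)) ({0..<k} \<times> {0..<t}) {0..<int (k * t)}"
proof -
  let ?f = "\<lambda>(i, j). int (t * g j i + r j)"
  have r_lt: "r j < t" if "j < t" for j
    using r that by (auto dest: bij_betw_apply)
  have g_lt: "g j i < k" if "j < t" "i < k" for i j
    using g[OF that(1)] that(2) by (auto dest: bij_betw_apply)
  have eq_imp: "i = i' \<and> j = j'"
    if ij: "i < k" "j < t" "i' < k" "j' < t" and eq: "t * g j i + r j = t * g j' i' + r j'"
    for i j i' j'
  proof -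
    have "r j = r j'" and gg: "g j i = g j' i'"
      using arg_cong[OF eq, of "\<lambda>v. v mod t"] arg_cong[OF eq, of "\<lambda>v. v div t"]
        r_lt[OF ij(2)] r_lt[OF ij(4)] by simp_all
    then have "j = j'"
      using inj_onD[OF bij_betw_imp_inj_on[OF r]] ij(2,4) by simp
    with gg show ?thesis
      using inj_onD[OF bij_betw_imp_inj_on[OF g[OF ij(2)]]] ij(1,3) by simp
  qed
  have inj: "inj_on ?f ({0..<k} \<times> {0..<t})"
    unfolding inj_on_def using eq_imp by (auto simp del: of_nat_add of_nat_mult)
  have lt: "t * g j i + r j < k * t" if "i < k" "j < t" for i j
  proof -
    have "t * g j i + r j < t * (g j i + 1)" and "g j i + 1 \<le> k"
      using r_lt[OF \<open>j < t\<close>] g_lt[OF \<open>j < t\<close> \<open>i < k\<close>] by auto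
    then show ?thesis
      by (metis mult.commute mult_le_mono2 order_less_le_trans)
  qed
  have sub: "?f ` ({0..<k} \<times> {0..<t}) \<subseteq> {0..<int (k * t)}"
    using lt by (auto simp del: of_nat_add of_nat_mult)
  have "?f ` ({0..<k} \<times> {0..<t}) = {0..<int (k * t)}"
    by (rule card_subset_eq[OF finite_atLeastLessThan_int sub])
      (simp only: card_image[OF inj] card_cartesian_product card_atLeastLessThan_int
        card_atLeastLessThan nat_int diff_zero)
  with inj show ?thesis
    by (rule bij_betw_imageI)
qed

lemma bij_betw_self_if_inj_on:
  "finite A \<Longrightarrow> f ` A \<subseteq> A \<Longrightarrow> inj_on f A \<Longrightarrow> bij_betw f A A"
  by (simp add: bij_betw_imageI endo_inj_surj)

definition shift_perm :: "nat \<Rightarrow> nat \<Rightarrow> nat" where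
  "shift_perm m i = (if i < 2*m then i else if i = 2*m then 4*m - 1 else i - 1)"

definition fold_perm :: "nat \<Rightarrow> nat \<Rightarrow> nat" where
  "fold_perm m i =
     (if i < 2*m then 2*(2*m - 1 - i) + 1 else if i = 2*m then 2*m else if i = 3*m then 0
      else 2*(4*m - i))"

definition copy_perm :: "nat \<Rightarrow> nat \<Rightarrow> nat \<Rightarrow> nat" where
  "copy_perm m j =
     (if j = 0 then id else if j = 1 then shift_perm m else if j = 2 then fold_perm m
      else if odd j then id else (\<lambda>i. 4*m - 1 - i))"

definition row_offset :: "nat \<Rightarrow> nat \<Rightarrow> nat" where
  "row_offset n j =
     (if j = 0 then 0 else if j = 1 then 1 else if j = 2 then 2*n
      else if odd j then (j + 1) div 2 else 2*n + 1 - j div 2)"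

definition magic_label :: "nat \<Rightarrow> nat \<Rightarrow> nat \<times> nat \<Rightarrow> int" where
  "magic_label m n = (\<lambda>(i, j). int ((2*n + 1) * copy_perm m j i + row_offset n j))"

lemma bij_betw_copy_perm: "bij_betw (copy_perm m j) {0..<4*m} {0..<4*m}"
proof (rule bij_betw_self_if_inj_on)
  show "copy_perm m j ` {0..<4*m} \<subseteq> {0..<4*m}"
    by (auto simp: copy_perm_def shift_perm_def fold_perm_def)
  have "inj_on (shift_perm m) {0..<4*m}"
    unfolding inj_on_def shift_perm_def by auto
  moreover have "inj_on (fold_perm m) {0..<4*m}"
    unfolding inj_on_def fold_perm_def by (auto split: if_splits; presburger)
  moreover have "inj_on (\<lambda>i. 4*m - 1 - i) {0..<4*m}"
    unfolding inj_on_def by auto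
  ultimately show "inj_on (copy_perm m j) {0..<4*m}"
    unfolding copy_perm_def by (auto simp only: inj_on_id split: if_split)
qed simp

lemma bij_betw_row_offset: "bij_betw (row_offset n) {0..<2*n+1} {0..<2*n+1}"
proof (rule bij_betw_self_if_inj_on)
  show "row_offset n ` {0..<2*n+1} \<subseteq> {0..<2*n+1}"
    by (auto simp: row_offset_def)
  show "inj_on (row_offset n) {0..<2*n+1}"
    unfolding inj_on_def row_offset_def by (auto split: if_splits elim!: oddE evenE)
qed simp

lemma bij_betw_magic_label:
  "bij_betw (magic_label m n) ({0..<4*m} \<times> {0..<2*n+1}) {0..<int (card ({0..<4*m} \<times> {0..<2*n+1}))}"
  unfolding magic_label_def card_cartesian_product card_atLeastLessThan diff_zero
  by (rule bij_betw_mixed_radix[OF bij_betw_row_offset bij_betw_copy_perm])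

lemma first_copies_column_dvd:
  assumes "m \<ge> 1" "i < 4*m"
  shows "int (4*m) dvd sign_in {(3*m, 0)} (i, 0) * int i + int (shift_perm m i) + int (fold_perm m i) + 1"
proof -
  consider "i = 3*m" | "i < 2*m" | "2*m \<le> i" "i \<noteq> 3*m"
    by linarith
  then show ?thesis
  proof cases
    case 1
    then have "sign_in {(3*m, 0)} (i, 0) * int i + int (shift_perm m i) + int (fold_perm m i) + 1 = 0"
      using assms by (simp add: sign_in_def shift_perm_def fold_perm_def)
    then show ?thesis by (metis dvd_0_right)
  next
    case 2
    then have "sign_in {(3*m, 0)} (i, 0) * int i + int (shift_perm m i) + int (fold_perm m i) + 1 = int (4*m)"
      using assms by (simp add: sign_in_def shift_perm_def fold_perm_def)
    then show ?thesis by (metis dvd_refl)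
  next
    case 3
    then have "sign_in {(3*m, 0)} (i, 0) * int i + int (shift_perm m i) + int (fold_perm m i) + 1 = 2 * int (4*m)"
      using assms by (auto simp: sign_in_def shift_perm_def fold_perm_def)
    then show ?thesis by (metis dvd_triv_right)
  qed
qed

lemma paired_copies_column_sum:
  assumes "i < 4*m" "1 \<le> a" "a < n"
  shows "magic_label m n (i, Suc (2*a)) + magic_label m n (i, Suc (Suc (2*a))) = int (4*m*(2*n+1))"
  using assms
  by (simp add: magic_label_def copy_perm_def row_offset_def algebra_simps)

lemma signed_column_sum_magic_label_dvd:
  assumes "m \<ge> 1" "n \<ge> 1" "i < 4*m"
  shows "int (4*m*(2*n+1)) dvd signed_column_sum {(3*m, 0)} {0..<2*n+1} (magic_label m n) i"
proof -
  let ?s = "sign_in {(3*m, 0)} :: nat \<times> nat \<Rightarrow> int"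
  have copies: "{0..<2*n+1} = {0, 1, 2} \<union> {Suc 2..Suc (Suc (2*(n-1)))}"
    using assms(2) by auto
  have "signed_column_sum {(3*m, 0)} {0..<2*n+1} (magic_label m n) i
      = (?s (i, 0) * magic_label m n (i, 0) + magic_label m n (i, 1) + magic_label m n (i, 2))
        + (\<Sum>j\<in>{Suc 2..Suc (Suc (2*(n-1)))}. magic_label m n (i, j))"
    unfolding signed_column_sum_def copies
    by (subst sum.union_disjoint) (auto simp: sign_in_def)
  also have "?s (i, 0) * magic_label m n (i, 0) + magic_label m n (i, 1) + magic_label m n (i, 2)
      = int (2*n+1) * (?s (i, 0) * int i + int (shift_perm m i) + int (fold_perm m i) + 1)"
    by (simp add: magic_label_def copy_perm_def row_offset_def algebra_simps)
  also have "(\<Sum>j\<in>{Suc 2..Suc (Suc (2*(n-1)))}. magic_label m n (i, j))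
      = (\<Sum>a = 1..n-1. magic_label m n (i, Suc (2*a)) + magic_label m n (i, Suc (Suc (2*a))))"
    unfolding sum.shift_bounds_cl_Suc_ivl sum.in_pairs[of _ 1, unfolded mult_1_right] ..
  also have "\<dots> = (\<Sum>a = 1..n-1. int (4*m*(2*n+1)))"
    using assms(2,3) by (intro sum.cong refl paired_copies_column_sum) auto
  finally have column: "signed_column_sum {(3*m, 0)} {0..<2*n+1} (magic_label m n) i
      = int (2*n+1) * (?s (i, 0) * int i + int (shift_perm m i) + int (fold_perm m i) + 1)
        + (\<Sum>a = 1..n-1. int (4*m*(2*n+1)))" .
  have "int (2*n+1) * int (4*m)
      dvd int (2*n+1) * (?s (i, 0) * int i + int (shift_perm m i) + int (fold_perm m i) + 1)"
    using first_copies_column_dvd[OF assms(1,3)] by (rule mult_dvd_mono[OF dvd_refl])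
  then have "int (4*m*(2*n+1))
      dvd int (2*n+1) * (?s (i, 0) * int i + int (shift_perm m i) + int (fold_perm m i) + 1)"
    by (simp only: of_nat_mult mult.commute)
  then show ?thesis
    unfolding column by (rule dvd_add) (rule dvd_sum, rule dvd_refl)
qed

theorem mainTheorem2:
  fixes m n :: nat
  assumes "m \<ge> 1" and "n \<ge> 1"
  shows "orientable_Zn_distance_magic
           (lex_prod_V {0..<4*m} {0..<2*n+1})
           (lex_prod_E {0..<4*m} (complete_graph_E (4*m)) {0..<2*n+1} (edgeless_graph_E (2*n+1)))"
proof -
  let ?V = "{0..<4*m} \<times> {0..<2*n+1}" and ?S = "{(3*m, 0)}"
  have "directed_Zn_distance_magic_labeling ?V (signed_orientation ?V ?S) (magic_label m n)"
  proof (rule directed_magic_if_signed_column_sums_dvd)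
    show "bij_betw (magic_label m n) ?V {0..<int (card ?V)}"
      by (rule bij_betw_magic_label)
    show "int (card ?V) dvd signed_column_sum ?S {0..<2*n+1} (magic_label m n) i"
      if "i \<in> {0..<4*m}" for i
      using signed_column_sum_magic_label_dvd[OF assms] that by (simp add: card_cartesian_product)
  qed simp_all
  then show ?thesis
    unfolding orientable_Zn_distance_magic_def lex_prod_V_def
    using orientation_signed_orientation by blast
qed

end
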